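(* Let $\mathcal{X}$ be a finite set of actions, $\mathcal{Y}$ a finite set of responses, $\mathcal{H}\subseteq\mathcal{Y}^{\mathcal{X}}$, $\mathrm{cost}:\mathcal{X}\times\mathcal{Y}\to\mathbb{R}_+$. Let $f:2^{\mathcal{X}\times\mathcal{Y}}\to\mathbb{R}_+$ and $Q>0$, and suppose $f$ is submodular and $f(\emptyset)=0$. If $\mathrm{OPT}<\phi_{\min}$, then $\max_{x\in\mathcal{X}}u^f(x,\emptyset)\ge Q/\mathrm{OPT}$.
   Context: The true state is an unknown $h^*\in\mathcal{H}$. An interactive algorithm, given the observed set $S$ of action-response pairs, either selects an action $x$ (observing $(x,h^*(x))$) or terminates; $S^h[\mathcal{A}]$ is the set collected until termination when $h^*=h$; $\mathrm{cost}(\mathcal{A})=\max_{h\in\mathcal{H}}\sum_{(x,y)\in S^h[\mathcal{A}]}\mathrm{cost}(x,y)$; $\mathrm{OPT}$ is the minimum of $\mathrm{cost}(\mathcal{A})$ over interactive algorithms with $f(S^h[\mathcal{A}])\ge Q$ for all $h\in\mathcal{H}$. Version space $V(S)=\{h\in\mathcal{H}\mid\forall(x,y)\in S,\ y=h(x)\}$; $\delta_g(z\mid A)=g(A\cup\{z\})-g(A)$; $u^f(x,S)=\min_{h\in V(S)}\frac{\delta_{\min(f,Q)}((x,h(x))\mid S)}{\mathrm{cost}(x,h(x))}$. $\phi(x)$ is the second-smallest value of the multiset $\{\mathrm{cost}(x,y)\mid y\in\mathcal{Y}\}$ and $\phi_{\min}=\min_{x\in\mathcal{X}}\phi(x)$.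 *)

theory Defs
  imports Complex_Main "HOL-Library.FuncSet" "HOL-Library.Multiset" "HOL-Library.Extended_Real"
begin

text \<open>Observed sets S are sets of action-response pairs. An interactive algorithm is
  a function mapping the observed set to either an action (Some x) or termination (None).\<close>

type_synonym ('x, 'y) alg = "('x \<times> 'y) set \<Rightarrow> 'x option"

definition valid_alg :: "'x set \<Rightarrow> ('x, 'y) alg \<Rightarrow> bool" where
  "valid_alg X A \<longleftrightarrow> (\<forall>S x. A S = Some x \<longrightarrow> x \<in> X)"

primrec run :: "('x, 'y) alg \<Rightarrow> ('x \<Rightarrow> 'y) \<Rightarrow> nat \<Rightarrow> ('x \<times> 'y) set" where
  "run A h 0 = {}"
| "run A h (Suc n) = (case A (run A h n) of None \<Rightarrow> run A h n
                        | Some x \<Rightarrow> insert (x, h x) (run A h n))"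

definition terminates :: "('x, 'y) alg \<Rightarrow> ('x \<Rightarrow> 'y) \<Rightarrow> bool" where
  "terminates A h \<longleftrightarrow> (\<exists>n. A (run A h n) = None)"

definition collected :: "('x, 'y) alg \<Rightarrow> ('x \<Rightarrow> 'y) \<Rightarrow> ('x \<times> 'y) set" where
  "collected A h = run A h (LEAST n. A (run A h n) = None)"

definition alg_cost :: "('x \<Rightarrow> 'y) set \<Rightarrow> ('x \<Rightarrow> 'y \<Rightarrow> real) \<Rightarrow> ('x, 'y) alg \<Rightarrow> real" where
  "alg_cost H cost A = Max ((\<lambda>h. \<Sum>(x,y)\<in>collected A h. cost x y) ` H)"

definition feasible ::
  "'x set \<Rightarrow> ('x \<Rightarrow> 'y) set \<Rightarrow> (('x \<times> 'y) set \<Rightarrow> real) \<Rightarrow> real \<Rightarrow> ('x, 'y) alg \<Rightarrow> bool" where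
  "feasible X H f Q A \<longleftrightarrow> valid_alg X A \<and>
     (\<forall>h\<in>H. terminates A h \<and> f (collected A h) \<ge> Q)"

text \<open>OPT as an extended real (= \<infinity> if no feasible algorithm exists).\<close>
definition OPT ::
  "'x set \<Rightarrow> ('x \<Rightarrow> 'y) set \<Rightarrow> ('x \<Rightarrow> 'y \<Rightarrow> real) \<Rightarrow> (('x \<times> 'y) set \<Rightarrow> real) \<Rightarrow> real \<Rightarrow> ereal" where
  "OPT X H cost f Q = (INF A \<in> {A. feasible X H f Q A}. ereal (alg_cost H cost A))"

definition version_space :: "('x \<Rightarrow> 'y) set \<Rightarrow> ('x \<times> 'y) set \<Rightarrow> ('x \<Rightarrow> 'y) set" where
  "version_space H S = {h \<in> H. \<forall>(x,y)\<in>S. y = h x}"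

definition marg_gain :: "(('x \<times> 'y) set \<Rightarrow> real) \<Rightarrow> ('x \<times> 'y) \<Rightarrow> ('x \<times> 'y) set \<Rightarrow> real" where
  "marg_gain g z A = g (insert z A) - g A"

definition util :: "('x \<Rightarrow> 'y) set \<Rightarrow> ('x \<Rightarrow> 'y \<Rightarrow> real) \<Rightarrow> (('x \<times> 'y) set \<Rightarrow> real) \<Rightarrow> real
     \<Rightarrow> 'x \<Rightarrow> ('x \<times> 'y) set \<Rightarrow> real" where
  "util H cost f Q x S =
     Min ((\<lambda>h. marg_gain (\<lambda>T. min (f T) Q) (x, h x) S / cost x (h x)) ` version_space H S)"

definition phi :: "'y set \<Rightarrow> ('x \<Rightarrow> 'y \<Rightarrow> real) \<Rightarrow> 'x \<Rightarrow> real" where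
  "phi Y cost x = sorted_list_of_multiset (image_mset (cost x) (mset_set Y)) ! 1"

definition phi_min :: "'x set \<Rightarrow> 'y set \<Rightarrow> ('x \<Rightarrow> 'y \<Rightarrow> real) \<Rightarrow> real" where
  "phi_min X Y cost = Min (phi Y cost ` X)"

definition submodular_on :: "'a set \<Rightarrow> ('a set \<Rightarrow> real) \<Rightarrow> bool" where
  "submodular_on U f \<longleftrightarrow> (\<forall>A B. A \<subseteq> B \<and> B \<subseteq> U \<longrightarrow>
      (\<forall>z \<in> U - B. f (insert z B) - f B \<le> f (insert z A) - f A))"

end

theory Submission
  imports Defs
begin

text \<open>Let A be a feasible algorithm of cost below \<open>phi_min\<close>. Every pair (x, y) it observes
  costs less than \<open>phi x\<close>, and for each action at most one response is that cheap; hence the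
  response to every query is the same under all hypotheses, A is effectively non-adaptive and
  collects one fixed set S with \<open>f S \<ge> Q\<close>. Submodularity gives
  \<open>Q \<le> \<Sum>z\<in>S. min (f {z}) Q\<close>, so some pair of S has gain-per-cost ratio at least
  \<open>Q / cost S \<ge> Q / cost A\<close>; since every hypothesis agrees with S, this ratio is the utility of
  its action at the empty observation. Taking the infimum over A gives the bound on OPT.\<close>

lemma run_mono: "m \<le> n \<Longrightarrow> run A h m \<subseteq> run A h n"
proof (induction n rule: dec_induct)
  case (step n)
  then show ?case by (cases "A (run A h n)") auto
qed simp

lemma run_stop:
  assumes "A (run A h n) = None" "n \<le> m"
  shows "run A h m = run A h n"
  using assms(2) by (induction m rule: dec_induct) (simp_all add: assms(1))

lemma finite_run: "finite (run A h n)"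
  by (induction n) (auto split: option.splits)

lemma run_graph: "(x, y) \<in> run A h n \<Longrightarrow> y = h x"
  by (induction n) (auto split: option.splits)

lemma run_subset_Sigma:
  assumes "valid_alg X A" "h \<in> X \<rightarrow>\<^sub>E Y"
  shows "run A h n \<subseteq> X \<times> Y"
  using assms by (induction n) (auto simp: valid_alg_def split: option.splits)

lemma run_Suc_subset_collected:
  assumes "terminates A h" "A (run A h n) = Some x"
  shows "run A h (Suc n) \<subseteq> collected A h"
proof -
  define N where "N = (LEAST n. A (run A h n) = None)"
  have stop: "A (run A h N) = None"
    using assms(1) unfolding terminates_def N_def by (rule LeastI_ex)
  have "n < N"
    using run_stop[of A h N n] stop assms(2) by (cases "n < N") auto
  then show ?thesis
    unfolding collected_def N_def[symmetric] by (intro run_mono) simp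
qed

lemma finite_collected: "finite (collected A h)"
  unfolding collected_def by (rule finite_run)

lemma collected_graph: "(x, y) \<in> collected A h \<Longrightarrow> y = h x"
  unfolding collected_def by (rule run_graph)

lemma run_eq_if_agree:
  assumes "\<And>n x. run A h n = run A h' n \<Longrightarrow> A (run A h n) = Some x \<Longrightarrow> h x = h' x"
  shows "run A h n = run A h' n"
proof (induction n)
  case (Suc n)
  then show ?case using assms[OF Suc] by (cases "A (run A h n)") auto
qed simp

lemma less_phi_unique:
  assumes "finite Y" "y1 \<in> Y" "y2 \<in> Y" "cost x y1 < phi Y cost x" "cost x y2 < phi Y cost x"
  shows "y1 = y2"
proof (rule ccontr)
  assume "y1 \<noteq> y2"
  define M where "M = image_mset (cost x) (mset_set Y)"
  have "mset_set Y = add_mset y1 (add_mset y2 (mset_set (Y - {y1} - {y2})))"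
    using assms \<open>y1 \<noteq> y2\<close> by (metis Diff_iff finite_Diff mset_set.remove singletonD)
  then have M: "M = add_mset (cost x y1) (add_mset (cost x y2)
                      (image_mset (cost x) (mset_set (Y - {y1} - {y2}))))"
    unfolding M_def by simp
  define l where "l = sorted_list_of_multiset M"
  have ml: "mset l = M" and sl: "sorted l"
    unfolding l_def by simp_all
  have "length l = size M"
    using ml by (metis size_mset)
  with M obtain a b rest where l: "l = a # b # rest"
    by (cases l; cases "tl l") auto
  have phi: "phi Y cost x = b"
    unfolding phi_def M_def[symmetric] l_def[symmetric] l by simp
  have "filter (\<lambda>t. t < b) l = filter (\<lambda>t. t < b) [a]"
    using sl unfolding l by (auto intro!: filter_False)
  then have "size (filter_mset (\<lambda>t. t < b) M) \<le> 1"
    unfolding ml[symmetric] mset_filter[symmetric] size_mset by simp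
  moreover have "size (filter_mset (\<lambda>t. t < b) M) \<ge> 2"
    using M assms(4,5) phi by simp
  ultimately show False by simp
qed

lemma submodular_on_le_sum_singletons:
  assumes "submodular_on U f" "f {} = 0" "finite S" "S \<subseteq> U"
  shows "f S \<le> (\<Sum>z\<in>S. f {z})"
  using assms(3,4)
proof (induction S rule: finite_induct)
  case (insert z S)
  then have "f (insert z S) - f S \<le> f {z} - f {}"
    using assms(1) unfolding submodular_on_def by blast
  with insert assms(2) show ?case by simp
qed (simp add: assms(2))

lemma min_sum_le_sum_min:
  fixes g :: "'a \<Rightarrow> real"
  assumes "finite S" "\<And>z. z \<in> S \<Longrightarrow> g z \<ge> 0" "Q \<ge> 0"
  shows "min (sum g S) Q \<le> (\<Sum>z\<in>S. min (g z) Q)"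
  using assms(1,2)
proof (induction S rule: finite_induct)
  case (insert z S)
  have "sum g S \<ge> 0" "g z \<ge> 0"
    using insert by (simp_all add: sum_nonneg)
  then have "min (g z + sum g S) Q \<le> min (g z) Q + min (sum g S) Q"
    using assms(3) by (auto simp: min_def)
  with insert show ?case by simp
qed (simp add: assms(3))

lemma exists_ratio_ge_sum_ratio:
  fixes g c :: "'a \<Rightarrow> real"
  assumes "finite S" "S \<noteq> {}" "\<And>z. z \<in> S \<Longrightarrow> c z > 0" "Q \<le> sum g S"
  shows "\<exists>z\<in>S. Q / sum c S \<le> g z / c z"
proof (rule ccontr)
  assume "\<not> ?thesis"
  then have "g z < Q / sum c S * c z" if "z \<in> S" for z
    using assms(3) that by (auto simp: not_le divide_less_eq)
  then have "sum g S < (\<Sum>z\<in>S. Q / sum c S * c z)"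
    using assms(1,2) by (intro sum_strict_mono) auto
  also have "\<dots> = Q / sum c S * sum c S"
    by (simp add: sum_distrib_left)
  also have "\<dots> = Q"
    using sum_pos[of S c] assms(1-3) by simp
  finally show False
    using assms(4) by simp
qed

lemma divide_le_swap:
  fixes q a b :: real
  shows "0 < a \<Longrightarrow> 0 < b \<Longrightarrow> q / a \<le> b \<longleftrightarrow> q / b \<le> a"
  by (simp add: pos_divide_le_eq mult.commute)

lemma util_empty_if_determined:
  assumes "H \<noteq> {}" "\<And>h. h \<in> H \<Longrightarrow> h x = y" "f {} = 0" "Q > 0"
  shows "util H cost f Q x {} = min (f {(x, y)}) Q / cost x y"
proof -
  have "(\<lambda>h. marg_gain (\<lambda>T. min (f T) Q) (x, h x) {} / cost x (h x)) ` H
          = {min (f {(x, y)}) Q / cost x y}"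
    using assms by (auto simp: marg_gain_def)
  then show ?thesis
    unfolding util_def version_space_def by simp
qed

context
  fixes X :: "'x set" and Y :: "'y set" and H :: "('x \<Rightarrow> 'y) set"
    and cost :: "'x \<Rightarrow> 'y \<Rightarrow> real"
  assumes finite_X: "finite X" and finite_Y: "finite Y" and H_PiE: "H \<subseteq> X \<rightarrow>\<^sub>E Y"
    and cost_pos: "\<forall>x\<in>X. \<forall>y\<in>Y. cost x y > 0"
begin

lemma finite_H: "finite H"
  using finite_PiE[OF finite_X, of "\<lambda>_. Y"] finite_Y H_PiE finite_subset by blast

lemma collected_subset_Sigma: "valid_alg X A \<Longrightarrow> h \<in> H \<Longrightarrow> collected A h \<subseteq> X \<times> Y"
  unfolding collected_def using run_subset_Sigma H_PiE by blast

lemma collected_cost_le_alg_cost: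
  "h \<in> H \<Longrightarrow> (\<Sum>(x, y)\<in>collected A h. cost x y) \<le> alg_cost H cost A"
  unfolding alg_cost_def using finite_H by (intro Max_ge) auto

lemma collected_cost_less_phi:
  assumes "valid_alg X A" "alg_cost H cost A < phi_min X Y cost"
    and "h \<in> H" "(x, y) \<in> collected A h"
  shows "cost x y < phi Y cost x"
proof -
  have sub: "collected A h \<subseteq> X \<times> Y"
    using collected_subset_Sigma assms(1,3) .
  then have "x \<in> X"
    using assms(4) by blast
  have "cost x y \<le> (\<Sum>(x, y)\<in>collected A h. cost x y)"
    using member_le_sum[of "(x, y)" "collected A h" "\<lambda>(x, y). cost x y"]
      assms(4) sub cost_pos finite_collected by fastforce
  also have "\<dots> < phi_min X Y cost"
    using collected_cost_le_alg_cost[OF assms(3), of A] assms(2) by linarith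
  also have "\<dots> \<le> phi Y cost x"
    unfolding phi_min_def using finite_X \<open>x \<in> X\<close> by simp
  finally show ?thesis .
qed

lemma cheap_alg_collected_eq:
  assumes "valid_alg X A" "\<forall>h\<in>H. terminates A h" "alg_cost H cost A < phi_min X Y cost"
    and "h \<in> H" "h' \<in> H"
  shows "collected A h = collected A h'"
proof -
  have "h x = h' x" if "run A h n = run A h' n" "A (run A h n) = Some x" for n x
  proof -
    have obs: "(x, h x) \<in> collected A h"
      using run_Suc_subset_collected[of A h n x] that(2) assms(2,4) by auto
    have obs': "(x, h' x) \<in> collected A h'"
      using run_Suc_subset_collected[of A h' n x] that assms(2,5) by auto
    have "h x \<in> Y" "h' x \<in> Y"
      using obs obs' collected_subset_Sigma[OF assms(1)] assms(4,5) by blast+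
    moreover have "cost x (h x) < phi Y cost x" "cost x (h' x) < phi Y cost x"
      using collected_cost_less_phi[OF assms(1,3,4) obs] collected_cost_less_phi[OF assms(1,3,5) obs'] .
    ultimately show ?thesis
      by (rule less_phi_unique[OF finite_Y])
  qed
  then have "run A h n = run A h' n" for n
    by (rule run_eq_if_agree)
  then show ?thesis
    by (simp add: collected_def)
qed

lemma cheap_alg_util_bound:
  fixes f :: "('x \<times> 'y) set \<Rightarrow> real" and Q :: real
  assumes f_nonneg: "\<forall>S \<subseteq> X \<times> Y. f S \<ge> 0" and "Q > 0"
    and "submodular_on (X \<times> Y) f" "f {} = 0"
    and "feasible X H f Q A" "alg_cost H cost A < phi_min X Y cost" "h0 \<in> H"
  shows "alg_cost H cost A > 0 \<and> Q / alg_cost H cost A \<le> (MAX x\<in>X. util H cost f Q x {})"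
proof -
  have valid: "valid_alg X A" and terminating: "\<forall>h\<in>H. terminates A h"
    and "Q \<le> f (collected A h0)"
    using assms(5,7) unfolding feasible_def by auto
  define S where "S = collected A h0"
  define c where "c = (\<lambda>(x, y). cost x y)"
  define g where "g = (\<lambda>z. min (f {z}) Q)"
  have "finite S" and S_sub: "S \<subseteq> X \<times> Y"
    unfolding S_def using finite_collected collected_subset_Sigma[OF valid assms(7)] by auto
  have "S \<noteq> {}"
    using \<open>Q \<le> f (collected A h0)\<close> assms(2,4) unfolding S_def by auto
  have c_pos: "c z > 0" if "z \<in> S" for z
    using that S_sub cost_pos unfolding c_def by auto
  have "Q \<le> min (f S) Q"
    using \<open>Q \<le> f (collected A h0)\<close> unfolding S_def by simp
  also have "\<dots> \<le> min (\<Sum>z\<in>S. f {z}) Q"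
    using submodular_on_le_sum_singletons[OF assms(3,4) \<open>finite S\<close> S_sub] by simp
  also have "\<dots> \<le> sum g S"
  proof -
    have "f {z} \<ge> 0" if "z \<in> S" for z
      using f_nonneg[rule_format, of "{z}"] that S_sub by blast
    then show ?thesis
      unfolding g_def using min_sum_le_sum_min[OF \<open>finite S\<close>] assms(2) by simp
  qed
  finally obtain x y where xy: "(x, y) \<in> S" and ratio: "Q / sum c S \<le> g (x, y) / c (x, y)"
    using exists_ratio_ge_sum_ratio[of S c Q g, OF \<open>finite S\<close> \<open>S \<noteq> {}\<close> c_pos]
    by auto
  have "sum c S > 0"
    using \<open>finite S\<close> \<open>S \<noteq> {}\<close> c_pos by (simp add: sum_pos)
  moreover have "sum c S \<le> alg_cost H cost A"
    using collected_cost_le_alg_cost[OF assms(7)] unfolding S_def c_def .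
  ultimately have "Q / alg_cost H cost A \<le> Q / sum c S"
    using \<open>Q > 0\<close> by (intro divide_left_mono) auto
  also have "\<dots> \<le> util H cost f Q x {}"
  proof -
    have "h x = y" if "h \<in> H" for h
      using xy cheap_alg_collected_eq[OF valid terminating assms(6) assms(7) that]
      unfolding S_def by (auto dest: collected_graph)
    then have "util H cost f Q x {} = g (x, y) / c (x, y)"
      unfolding g_def c_def prod.case using assms(2,4,7) by (intro util_empty_if_determined) auto
    with ratio show ?thesis by simp
  qed
  also have "\<dots> \<le> (MAX x\<in>X. util H cost f Q x {})"
    using finite_X xy S_sub by (intro Max_ge) auto
  finally show ?thesis
    using \<open>sum c S > 0\<close> \<open>sum c S \<le> alg_cost H cost A\<close> by simp
qed

lemma OPT_ge_div_max_util:
  fixes f :: "('x \<times> 'y) set \<Rightarrow> real" and Q :: real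
  defines "M \<equiv> MAX x\<in>X. util H cost f Q x {}"
  assumes "\<forall>S \<subseteq> X \<times> Y. f S \<ge> 0" "Q > 0" "submodular_on (X \<times> Y) f" "f {} = 0"
    and "H \<noteq> {}" "OPT X H cost f Q < ereal (phi_min X Y cost)"
  shows "M > 0 \<and> ereal (Q / M) \<le> OPT X H cost f Q"
proof -
  obtain h0 where "h0 \<in> H"
    using assms(6) by blast
  note bound = cheap_alg_util_bound[OF assms(2-5) _ _ \<open>h0 \<in> H\<close>, folded M_def]
  obtain A0 where A0: "feasible X H f Q A0" "alg_cost H cost A0 < phi_min X Y cost"
    using assms(7) unfolding OPT_def by (auto simp: INF_less_iff)
  have c0: "alg_cost H cost A0 > 0" "Q / alg_cost H cost A0 \<le> M"
    using bound[OF A0] by auto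
  then have "M > 0"
    using \<open>Q > 0\<close> divide_pos_pos[of Q "alg_cost H cost A0"] by linarith
  with c0 have "Q / M \<le> alg_cost H cost A0"
    using divide_le_swap[of "alg_cost H cost A0" M Q] by simp
  have "Q / M \<le> alg_cost H cost A" if "feasible X H f Q A" for A
  proof (cases "alg_cost H cost A < phi_min X Y cost")
    case True
    then show ?thesis
      using bound[OF that True] \<open>M > 0\<close> divide_le_swap[of "alg_cost H cost A" M Q] by simp
  qed (use A0(2) \<open>Q / M \<le> alg_cost H cost A0\<close> in linarith)
  then show ?thesis
    unfolding OPT_def using \<open>M > 0\<close> by (auto intro: INF_greatest)
qed

end

theorem lemma5:
  fixes X :: "'x set" and Y :: "'y set" and H :: "('x \<Rightarrow> 'y) set"
    and cost :: "'x \<Rightarrow> 'y \<Rightarrow> real" and f :: "('x \<times> 'y) set \<Rightarrow> real" and Q :: real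
  assumes "finite X" "X \<noteq> {}" "finite Y" "card Y \<ge> 2"
    and "H \<subseteq> X \<rightarrow>\<^sub>E Y" "H \<noteq> {}"
    and "\<forall>x\<in>X. \<forall>y\<in>Y. cost x y > 0"
    and "\<forall>S \<subseteq> X \<times> Y. f S \<ge> 0"
    and "Q > 0"
    and "submodular_on (X \<times> Y) f"
    and "f {} = 0"
    and "OPT X H cost f Q < ereal (phi_min X Y cost)"
  shows "(MAX x\<in>X. util H cost f Q x {}) \<ge> Q / real_of_ereal (OPT X H cost f Q)"
proof -
  define M where "M = (MAX x\<in>X. util H cost f Q x {})"
  have "M > 0" and "ereal (Q / M) \<le> OPT X H cost f Q"
    using OPT_ge_div_max_util[OF assms(1,3,5,7-11,6,12)] unfolding M_def by auto
  then obtain opt where opt: "OPT X H cost f Q = ereal opt" "Q / M \<le> opt"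
    using assms(12) by (cases "OPT X H cost f Q") auto
  moreover have "opt > 0"
    using opt(2) \<open>M > 0\<close> \<open>Q > 0\<close> divide_pos_pos[of Q M] by linarith
  ultimately have "Q / opt \<le> M"
    using divide_le_swap[of opt M Q] \<open>M > 0\<close> by simp
  then show ?thesis
    unfolding M_def opt(1) by simp
qed

end
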